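(* Let $n$ be a positive integer and let $R_3(n)$ denote the number of reduced $3\times n$ Latin rectangles. Define \[ g(t_{00},t_{10},t_{01},t_{11}) = (t_{00}+t_{10})(t_{00}+t_{01}) - t_{00}. \] Then \begin{eqnarray*} R_3(n)&=& \sum_{s_{00}+s_{10}+s_{01}+s_{11}=n} (-1)^{s_{10}+s_{01}+2s_{11}} \frac{n!}{s_{00}!\,s_{10}!\,s_{01}!\,s_{11}!} \\&&\cdot\; g(s_{00}-1,s_{10},s_{01},s_{11}+1)^{s_{00}}\, g(s_{00},s_{10}-1,s_{01},s_{11}+1)^{s_{10}} \\&&\cdot\; g(s_{00},s_{10},s_{01}-1,s_{11}+1)^{s_{01}}\, g(s_{00},s_{10},s_{01},s_{11})^{s_{11}}, \end{eqnarray*} where the sum runs over all quadruples of nonnegative integers $(s_{00},s_{10},s_{01},s_{11})$ with sum $n$.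
   Context: A $k\times n$ Latin rectangle is a $k\times n$ matrix with entries in $\{1,\dots,n\}$ such that no row and no column contains a repeated entry (so each row is a permutation of $\{1,\dots,n\}$). It is reduced if its first row is $1,2,\dots,n$ in order. The convention $x^0=1$ for every integer $x$ (including $0^0=1$) is used. *)

theory Defs
  imports Main
begin

text \<open>A k x n matrix is modelled as a function M :: nat => nat => nat, where M i j is the
entry in row i < k and column j < n (0-based indices). Entries outside the k x n range are
required to be 0, so that each matrix corresponds to exactly one function (this only serves
to make the set of Latin rectangles finite and in bijection with the actual matrices).\<close>

definition latin_rect :: "nat \<Rightarrow> nat \<Rightarrow> (nat \<Rightarrow> nat \<Rightarrow> nat) \<Rightarrow> bool" where
  "latin_rect k n M \<longleftrightarrow>
     (\<forall>i<k. \<forall>j<n. M i j \<in> {1..n}) \<and>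
     (\<forall>i<k. inj_on (\<lambda>j. M i j) {..<n}) \<and>
     (\<forall>j<n. inj_on (\<lambda>i. M i j) {..<k}) \<and>
     (\<forall>i j. \<not> (i < k \<and> j < n) \<longrightarrow> M i j = 0)"

definition reduced_latin_rect :: "nat \<Rightarrow> nat \<Rightarrow> (nat \<Rightarrow> nat \<Rightarrow> nat) \<Rightarrow> bool" where
  "reduced_latin_rect k n M \<longleftrightarrow> latin_rect k n M \<and> (\<forall>j<n. M 0 j = j + 1)"

definition R3 :: "nat \<Rightarrow> nat" where
  "R3 n = card {M. reduced_latin_rect 3 n M}"

definition g :: "int \<Rightarrow> int \<Rightarrow> int \<Rightarrow> int \<Rightarrow> int" where
  "g t00 t10 t01 t11 = (t00 + t10) * (t00 + t01) - t00"

end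

theory Submission
  imports Defs "HOL-Library.FuncSet"
begin

(*
  Rows two and three of a reduced 3 x n Latin rectangle are permutations f, h of {0..<n} such
  that j, f j, h j are pairwise distinct, so R3 n is the sum over pairs of permutations of
  prod_i A i (f i) (h i) with A i j k = [i, j, k pairwise distinct]. Ryser's inclusion-exclusion
  over the images of f and h turns this into the sum over S, T of (-1)^(|S| + |T|) times
  prod_i (sum over j in S, k in T of A i j k). That inner count is g evaluated at the sizes of
  S Int T, S - T, T - S with i removed, so the summand depends only on the sizes of the four
  Venn regions of (S, T), and grouping the pairs (S, T) by these sizes produces the multinomial
  coefficients.
*)

text \<open>Permutations of N as extensional functions, the form in which \<open>prod_sum_PiE\<close> expands
  products of sums.\<close>

definition ext_perms :: "'a set \<Rightarrow> ('a \<Rightarrow> 'a) set" where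
  "ext_perms N = {f \<in> N \<rightarrow>\<^sub>E N. f ` N = N}"

lemma sum_Pow_superset_sign:
  assumes "finite N" "B \<subseteq> N"
  shows "(\<Sum>S\<in>Pow N. (-1) ^ card S * of_bool (B \<subseteq> S)) = ((-1) ^ card N * of_bool (B = N) :: 'a::ring_1)"
proof -
  have "(\<Sum>S\<in>Pow N. (-1) ^ card S * of_bool (B \<subseteq> S)) = (\<Sum>S | S \<subseteq> N \<and> B \<subseteq> S. (-1) ^ card S :: 'a)"
    using assms by (auto intro!: sum.mono_neutral_cong_right)
  also have "\<dots> = (-1) ^ card N * of_bool (B = N)"
  proof (cases "B = N")
    case True
    then have "{S. S \<subseteq> N \<and> B \<subseteq> S} = {N}" by auto
    with True show ?thesis by simp
  next
    case False
    with assms have "B \<subset> N" by auto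
    with assms False show ?thesis
      by (simp add: sum_alternating_cancels card_subsupersets_even_odd)
  qed
  finally show ?thesis .
qed

lemma sum_Pow_sign_sum_PiE:
  fixes F :: "('a \<Rightarrow> 'a) \<Rightarrow> 'c::comm_ring_1"
  assumes "finite N"
  shows "(\<Sum>S\<in>Pow N. (-1) ^ card S * (\<Sum>f\<in>N \<rightarrow>\<^sub>E S. F f)) =
         (-1) ^ card N * (\<Sum>f\<in>ext_perms N. F f)"
proof -
  have PiE_sub: "N \<rightarrow>\<^sub>E S = (N \<rightarrow>\<^sub>E N) \<inter> {f. f ` N \<subseteq> S}" if "S \<subseteq> N" for S
    using that by (auto simp: PiE_def Pi_def)
  have "(\<Sum>S\<in>Pow N. (-1) ^ card S * (\<Sum>f\<in>N \<rightarrow>\<^sub>E S. F f)) =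
        (\<Sum>S\<in>Pow N. \<Sum>f\<in>N \<rightarrow>\<^sub>E N. (-1) ^ card S * of_bool (f ` N \<subseteq> S) * F f)"
  proof (rule sum.cong [OF refl])
    fix S assume "S \<in> Pow N"
    then have "(\<Sum>f\<in>N \<rightarrow>\<^sub>E S. F f) = (\<Sum>f\<in>N \<rightarrow>\<^sub>E N. of_bool (f ` N \<subseteq> S) * F f)"
      using assms by (subst PiE_sub) (auto simp: finite_PiE)
    then show "(-1) ^ card S * (\<Sum>f\<in>N \<rightarrow>\<^sub>E S. F f) =
        (\<Sum>f\<in>N \<rightarrow>\<^sub>E N. (-1) ^ card S * of_bool (f ` N \<subseteq> S) * F f)"
      by (simp add: sum_distrib_left mult.assoc)
  qed
  also have "\<dots> = (\<Sum>f\<in>N \<rightarrow>\<^sub>E N. F f * (\<Sum>S\<in>Pow N. (-1) ^ card S * of_bool (f ` N \<subseteq> S)))"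
    by (subst sum.swap) (simp add: sum_distrib_left mult_ac)
  also have "\<dots> = (\<Sum>f\<in>N \<rightarrow>\<^sub>E N. (-1) ^ card N * (F f * of_bool (f ` N = N)))"
  proof (rule sum.cong [OF refl])
    fix f assume "f \<in> N \<rightarrow>\<^sub>E N"
    then have "f ` N \<subseteq> N"
      by (auto simp: PiE_iff)
    then show "F f * (\<Sum>S\<in>Pow N. (-1) ^ card S * of_bool (f ` N \<subseteq> S)) =
        (-1) ^ card N * (F f * of_bool (f ` N = N))"
      by (simp only: sum_Pow_superset_sign [OF assms] mult.left_commute)
  qed
  also have "\<dots> = (-1) ^ card N * (\<Sum>f\<in>ext_perms N. F f)"
    using assms by (simp add: ext_perms_def sum_distrib_left [symmetric] finite_PiE Collect_conj_eq)
  finally show ?thesis .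
qed

lemma ryser_perm_pairs:
  fixes A :: "'a \<Rightarrow> 'a \<Rightarrow> 'a \<Rightarrow> 'c::comm_ring_1"
  assumes "finite N"
  shows "(\<Sum>S\<in>Pow N. \<Sum>T\<in>Pow N. (-1) ^ (card S + card T) * (\<Prod>i\<in>N. \<Sum>j\<in>S. \<Sum>k\<in>T. A i j k)) =
         (\<Sum>f\<in>ext_perms N. \<Sum>h\<in>ext_perms N. \<Prod>i\<in>N. A i (f i) (h i))"
proof -
  have fin: "finite S" if "S \<in> Pow N" for S
    using that assms finite_subset by blast
  have "(\<Prod>i\<in>N. \<Sum>j\<in>S. \<Sum>k\<in>T. A i j k) = (\<Sum>f\<in>N \<rightarrow>\<^sub>E S. \<Sum>h\<in>N \<rightarrow>\<^sub>E T. \<Prod>i\<in>N. A i (f i) (h i))"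
    if "S \<in> Pow N" "T \<in> Pow N" for S T
    using that assms fin by (simp add: prod_sum_PiE)
  then have "(\<Sum>S\<in>Pow N. \<Sum>T\<in>Pow N. (-1) ^ (card S + card T) * (\<Prod>i\<in>N. \<Sum>j\<in>S. \<Sum>k\<in>T. A i j k)) =
      (\<Sum>S\<in>Pow N. (-1) ^ card S * (\<Sum>f\<in>N \<rightarrow>\<^sub>E S.
         \<Sum>T\<in>Pow N. (-1) ^ card T * (\<Sum>h\<in>N \<rightarrow>\<^sub>E T. \<Prod>i\<in>N. A i (f i) (h i))))"
    by (simp add: power_add sum_distrib_left mult.assoc sum.swap [where A = "Pow N"])
  also have "\<dots> = (\<Sum>S\<in>Pow N. (-1) ^ card S * (\<Sum>f\<in>N \<rightarrow>\<^sub>E S.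
      (-1) ^ card N * (\<Sum>h\<in>ext_perms N. \<Prod>i\<in>N. A i (f i) (h i))))"
    using assms by (simp add: sum_Pow_sign_sum_PiE)
  also have "\<dots> = (-1) ^ card N * (\<Sum>S\<in>Pow N. (-1) ^ card S * (\<Sum>f\<in>N \<rightarrow>\<^sub>E S.
      \<Sum>h\<in>ext_perms N. \<Prod>i\<in>N. A i (f i) (h i)))"
    by (simp add: sum_distrib_left mult.left_commute)
  also have "\<dots> = (-1) ^ card N * (-1) ^ card N * (\<Sum>f\<in>ext_perms N.
      \<Sum>h\<in>ext_perms N. \<Prod>i\<in>N. A i (f i) (h i))"
    using assms by (simp only: sum_Pow_sign_sum_PiE mult.assoc)
  finally show ?thesis
    by (simp flip: power_add)
qed

definition discordant_pairs :: "nat \<Rightarrow> ((nat \<Rightarrow> nat) \<times> (nat \<Rightarrow> nat)) set" where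
  "discordant_pairs n = {(f, h) \<in> ext_perms {..<n} \<times> ext_perms {..<n}.
     \<forall>j<n. f j \<noteq> j \<and> h j \<noteq> j \<and> f j \<noteq> h j}"

text \<open>The rows are the identity, f and h, shifted by one because entries range over
  \<open>{1..n}\<close> while the permutations act on \<open>{..<n}\<close>.\<close>

definition latin_rect_of :: "nat \<Rightarrow> (nat \<Rightarrow> nat) \<Rightarrow> (nat \<Rightarrow> nat) \<Rightarrow> nat \<Rightarrow> nat \<Rightarrow> nat" where
  "latin_rect_of n f h i j = (if i < 3 \<and> j < n then [j, f j, h j] ! i + 1 else 0)"

lemma ext_perms_inj_on: "f \<in> ext_perms N \<Longrightarrow> finite N \<Longrightarrow> inj_on f N"
  by (simp add: ext_perms_def eq_card_imp_inj_on)

lemma less_3_cases: "(i::nat) < 3 \<longleftrightarrow> i = 0 \<or> i = 1 \<or> i = 2"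
  by auto

lemma latin_rect_row_in_ext_perms:
  assumes "latin_rect k n M" "i < k"
  shows "restrict (\<lambda>j. M i j - 1) {..<n} \<in> ext_perms {..<n}"
proof -
  let ?f = "restrict (\<lambda>j. M i j - 1) {..<n}"
  have entries: "M i j \<in> {1..n}" if "j < n" for j
    using assms that by (auto simp: latin_rect_def)
  have "inj_on (M i) {..<n}"
    using assms by (auto simp: latin_rect_def)
  moreover have "M i x - 1 = M i y - 1 \<Longrightarrow> M i x = M i y" if "x < n" "y < n" for x y
    using entries[OF that(1)] entries[OF that(2)] by auto
  ultimately have "inj_on ?f {..<n}"
    by (simp add: inj_on_def)
  moreover have "?f \<in> {..<n} \<rightarrow>\<^sub>E {..<n}"
    using entries by force
  ultimately show ?thesis
    by (simp add: ext_perms_def endo_inj_surj PiE_iff image_subset_iff)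
qed

lemma reduced_latin_rect_of:
  assumes "(f, h) \<in> discordant_pairs n"
  shows "reduced_latin_rect 3 n (latin_rect_of n f h)"
proof -
  let ?M = "latin_rect_of n f h"
  have perms: "f \<in> ext_perms {..<n}" "h \<in> ext_perms {..<n}"
    and discordant: "\<And>j. j < n \<Longrightarrow> f j \<noteq> j \<and> h j \<noteq> j \<and> f j \<noteq> h j"
    using assms by (auto simp: discordant_pairs_def)
  have entries: "f j < n" "h j < n" if "j < n" for j
    using perms that by (auto simp: ext_perms_def)
  have "inj_on f {..<n}" "inj_on h {..<n}"
    using perms by (simp_all add: ext_perms_inj_on)
  then have "inj_on (\<lambda>j. ?M i j) {..<n}" if "i < 3" for i
    using that by (auto simp: less_3_cases inj_on_def latin_rect_of_def)
  moreover have "?M i j \<in> {1..n}" if "i < 3" "j < n" for i j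
    using that entries[OF that(2)] by (auto simp: less_3_cases latin_rect_of_def Suc_le_eq)
  moreover have "inj_on (\<lambda>i. ?M i j) {..<3}" if "j < n" for j
    using that discordant[OF that] by (auto simp: less_3_cases inj_on_def latin_rect_of_def)
  ultimately show ?thesis
    by (auto simp: reduced_latin_rect_def latin_rect_def latin_rect_of_def)
qed

lemma reduced_latin_rect_3E:
  assumes "reduced_latin_rect 3 n M"
  obtains f h where "(f, h) \<in> discordant_pairs n" and "M = latin_rect_of n f h"
proof -
  define f where "f = restrict (\<lambda>j. M 1 j - 1) {..<n}"
  define h where "h = restrict (\<lambda>j. M 2 j - 1) {..<n}"
  have latin: "latin_rect 3 n M" and first_row: "\<forall>j<n. M 0 j = j + 1"
    using assms by (auto simp: reduced_latin_rect_def)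
  have entries: "M i j \<in> {1..n}" if "i < 3" "j < n" for i j
    using latin that by (auto simp: latin_rect_def)
  have column: "inj_on (\<lambda>i. M i j) {..<3}" if "j < n" for j
    using latin that by (auto simp: latin_rect_def)
  have outside: "M i j = 0" if "\<not> (i < 3 \<and> j < n)" for i j
    using latin that by (auto simp: latin_rect_def)
  have distinct: "M 0 j \<noteq> M 1 j" "M 0 j \<noteq> M 2 j" "M 1 j \<noteq> M 2 j" if "j < n" for j
    using inj_on_contraD[OF column[OF that]] by simp_all
  have "f j \<noteq> j \<and> h j \<noteq> j \<and> f j \<noteq> h j" if "j < n" for j
    using that distinct[OF that] entries[of 1 j] entries[of 2 j] first_row by (auto simp: f_def h_def)
  moreover have "f \<in> ext_perms {..<n}" "h \<in> ext_perms {..<n}"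
    unfolding f_def h_def by (rule latin_rect_row_in_ext_perms [OF latin], simp)+
  ultimately have "(f, h) \<in> discordant_pairs n"
    by (simp add: discordant_pairs_def)
  moreover have "M = latin_rect_of n f h"
  proof (intro ext)
    fix i j
    show "M i j = latin_rect_of n f h i j"
      using entries[of i j] outside[of i j] first_row
      by (cases "i < 3 \<and> j < n") (auto simp: latin_rect_of_def f_def h_def less_3_cases)
  qed
  ultimately show thesis
    using that by blast
qed

lemma inj_on_latin_rect_of: "inj_on (\<lambda>(f, h). latin_rect_of n f h) (discordant_pairs n)"
proof (rule inj_on_inverseI)
  fix p assume "p \<in> discordant_pairs n"
  then obtain f h where p: "p = (f, h)" and "f \<in> extensional {..<n}" "h \<in> extensional {..<n}"
    by (auto simp: discordant_pairs_def ext_perms_def PiE_def)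
  then show "(restrict (\<lambda>j. (\<lambda>(f, h). latin_rect_of n f h) p 1 j - 1) {..<n},
              restrict (\<lambda>j. (\<lambda>(f, h). latin_rect_of n f h) p 2 j - 1) {..<n}) = p"
    by (auto simp: latin_rect_of_def intro!: extensionalityI[where A = "{..<n}"])
qed

lemma R3_eq_card_discordant_pairs: "R3 n = card (discordant_pairs n)"
proof -
  have "{M. reduced_latin_rect 3 n M} = (\<lambda>(f, h). latin_rect_of n f h) ` discordant_pairs n"
  proof (intro equalityI subsetI)
    fix M assume "M \<in> {M. reduced_latin_rect 3 n M}"
    then obtain f h where "(f, h) \<in> discordant_pairs n" "M = latin_rect_of n f h"
      by (auto elim: reduced_latin_rect_3E)
    then show "M \<in> (\<lambda>(f, h). latin_rect_of n f h) ` discordant_pairs n"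
      by force
  qed (auto simp: reduced_latin_rect_of)
  then show ?thesis
    by (simp add: R3_def card_image inj_on_latin_rect_of)
qed

lemma prod_of_bool:
  "finite A \<Longrightarrow> (\<Prod>i\<in>A. of_bool (P i)) = (of_bool (\<forall>i\<in>A. P i) :: 'a::comm_semiring_1)"
  by (induction A rule: finite_induct) auto

lemma int_card_discordant_pairs:
  "int (card (discordant_pairs n)) = (\<Sum>f\<in>ext_perms {..<n}. \<Sum>h\<in>ext_perms {..<n}.
     \<Prod>i<n. of_bool (f i \<noteq> i \<and> h i \<noteq> i \<and> f i \<noteq> h i))"
proof -
  let ?P = "ext_perms {..<n}" and ?discordant = "\<lambda>(f, h). \<forall>i\<in>{..<n}. f i \<noteq> i \<and> h i \<noteq> i \<and> f i \<noteq> h i"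
  have "finite ?P"
    by (simp add: ext_perms_def finite_PiE)
  moreover have "discordant_pairs n = (?P \<times> ?P) \<inter> {p. ?discordant p}"
    by (auto simp: discordant_pairs_def)
  ultimately have "int (card (discordant_pairs n)) = (\<Sum>p\<in>?P \<times> ?P. of_bool (?discordant p))"
    by simp
  also have "\<dots> = (\<Sum>f\<in>?P. \<Sum>h\<in>?P. of_bool (\<forall>i\<in>{..<n}. f i \<noteq> i \<and> h i \<noteq> i \<and> f i \<noteq> h i))"
    by (simp add: sum.cartesian_product split_def)
  finally show ?thesis
    by (simp add: prod_of_bool)
qed

lemma int_card_Diff_singleton:
  assumes "finite A"
  shows "int (card (A - {x})) = int (card A) - of_bool (x \<in> A)"
proof (cases "x \<in> A")
  case True
  with assms have "card A > 0"
    by (auto simp: card_gt_0_iff)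
  with True show ?thesis
    by (simp add: of_nat_diff)
qed simp

lemma sum_of_bool_noteq:
  "finite T \<Longrightarrow> (\<Sum>k\<in>T. of_bool (j \<noteq> k)) = int (card T) - of_bool (j \<in> T)"
proof -
  assume "finite T"
  moreover have "T \<inter> {k. j \<noteq> k} = T - {j}"
    by auto
  ultimately show ?thesis
    by (simp add: int_card_Diff_singleton)
qed

text \<open>The last argument \<open>t\<close> is arbitrary, as \<open>g\<close> does not depend on it.\<close>

lemma sum_sum_distinct_avoiding_eq_g:
  fixes S T :: "'a set"
  assumes "finite S" "finite T"
  shows "(\<Sum>j\<in>S. \<Sum>k\<in>T. of_bool (j \<noteq> i \<and> k \<noteq> i \<and> j \<noteq> k)) =
    g (int (card (S \<inter> T - {i}))) (int (card (S - T - {i}))) (int (card (T - S - {i}))) t"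
proof -
  let ?S = "S - {i}" and ?T = "T - {i}"
  have "(\<Sum>j\<in>S. \<Sum>k\<in>T. of_bool (j \<noteq> i \<and> k \<noteq> i \<and> j \<noteq> k)) = (\<Sum>j\<in>?S. \<Sum>k\<in>?T. of_bool (j \<noteq> k) :: int)"
    using assms by (intro sum.mono_neutral_cong_right) (auto intro: sum.neutral)
  also have "\<dots> = (\<Sum>j\<in>?S. int (card ?T) - of_bool (j \<in> ?T))"
    using assms by (intro sum.cong refl sum_of_bool_noteq) simp
  also have "\<dots> = int (card ?S) * int (card ?T) - int (card (S \<inter> T - {i}))"
  proof -
    have "(S - {i}) \<inter> T = S \<inter> T - {i}"
      by auto
    with assms show ?thesis
      by (simp add: sum_subtractf)
  qed
  also have "card ?S = card (S \<inter> T - {i}) + card (S - T - {i})"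
    using assms by (subst card_Un_disjoint [symmetric]) (auto intro: arg_cong [where f = card])
  also have "card ?T = card (S \<inter> T - {i}) + card (T - S - {i})"
    using assms by (subst card_Un_disjoint [symmetric]) (auto intro: arg_cong [where f = card])
  finally show ?thesis
    by (simp add: g_def)
qed

definition R3_term :: "nat \<Rightarrow> nat \<Rightarrow> nat \<Rightarrow> nat \<Rightarrow> int" where
  "R3_term s00 s10 s01 s11 = (-1) ^ (s10 + s01 + 2 * s11)
     * g (int s00 - 1) (int s10) (int s01) (int s11 + 1) ^ s00
     * g (int s00) (int s10 - 1) (int s01) (int s11 + 1) ^ s10
     * g (int s00) (int s10) (int s01 - 1) (int s11 + 1) ^ s01
     * g (int s00) (int s10) (int s01) (int s11) ^ s11"

lemma signed_prod_sum_sum_distinct_avoiding: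
  assumes "finite N" "S \<subseteq> N" "T \<subseteq> N"
  shows "(-1) ^ (card S + card T) * (\<Prod>i\<in>N. \<Sum>j\<in>S. \<Sum>k\<in>T. of_bool (j \<noteq> i \<and> k \<noteq> i \<and> j \<noteq> k)) =
    R3_term (card (S \<inter> T)) (card (S - T)) (card (T - S)) (card (N - (S \<union> T)))"
proof -
  define a b c d where abcd: "a = card (S \<inter> T)" "b = card (S - T)" "c = card (T - S)" "d = card (N - (S \<union> T))"
  define row where "row i = (\<Sum>j\<in>S. \<Sum>k\<in>T. of_bool (j \<noteq> i \<and> k \<noteq> i \<and> j \<noteq> k) :: int)" for i
  have fin: "finite S" "finite T"
    using assms finite_subset by blast+
  have row: "row i = g (int a - of_bool (i \<in> S \<inter> T)) (int b - of_bool (i \<in> S - T)) (int c - of_bool (i \<in> T - S)) t"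
    for i t
    unfolding row_def sum_sum_distinct_avoiding_eq_g [OF fin, where t = t]
    using fin by (simp add: abcd int_card_Diff_singleton)
  have region: "prod row A = x ^ card A" if "\<And>i. i \<in> A \<Longrightarrow> row i = x" for A x
    using that by (simp cong: prod.cong_simp)
  have "prod row (S \<inter> T) = g (int a - 1) (int b) (int c) (int d + 1) ^ a"
    by (subst region) (simp_all add: row [where t = "int d + 1"] abcd)
  moreover have "prod row (S - T) = g (int a) (int b - 1) (int c) (int d + 1) ^ b"
    by (subst region) (simp_all add: row [where t = "int d + 1"] abcd)
  moreover have "prod row (T - S) = g (int a) (int b) (int c - 1) (int d + 1) ^ c"
    by (subst region) (simp_all add: row [where t = "int d + 1"] abcd)
  moreover have "prod row (N - (S \<union> T)) = g (int a) (int b) (int c) (int d) ^ d"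
    by (subst region) (simp_all add: row [where t = "int d"] abcd)
  moreover have "prod row N = prod row (S \<inter> T) * prod row (S - T) * prod row (T - S) * prod row (N - (S \<union> T))"
    using assms fin by (simp add: prod.subset_diff [of "S \<union> T" N] prod.union_diff2 mult_ac)
  ultimately have "prod row N = g (int a - 1) (int b) (int c) (int d + 1) ^ a
     * g (int a) (int b - 1) (int c) (int d + 1) ^ b
     * g (int a) (int b) (int c - 1) (int d + 1) ^ c
     * g (int a) (int b) (int c) (int d) ^ d"
    by simp
  moreover have "(-1::int) ^ (card S + card T) = (-1) ^ (b + c + 2 * d)"
    using fin card_Int_Diff [of S T] card_Int_Diff [of T S]
    by (simp add: abcd Int_commute power_add power_mult)
  ultimately show ?thesis
    by (simp add: R3_term_def row_def abcd mult.assoc)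
qed

lemma sum_quadruples_eq_nested:
  fixes n :: nat
  shows "(\<Sum>(a, b, c, d)\<in>{(a, b, c, d). a + b + c + d = n}. H a b c d) =
   (\<Sum>s\<le>n. \<Sum>a\<le>s. \<Sum>c\<le>n - s. H a (s - a) c (n - s - c))"
proof -
  have "(\<Sum>s\<le>n. \<Sum>a\<le>s. \<Sum>c\<le>n - s. H a (s - a) c (n - s - c)) =
        (\<Sum>(s, a, c)\<in>(SIGMA s:{..n}. {..s} \<times> {..n - s}). H a (s - a) c (n - s - c))"
    by (simp add: sum.Sigma sum.cartesian_product)
  also have "\<dots> = (\<Sum>(a, b, c, d)\<in>{(a, b, c, d). a + b + c + d = n}. H a b c d)"
    by (rule sum.reindex_bij_witness [where i = "\<lambda>(a, b, c, d). (a + b, a, c)"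
          and j = "\<lambda>(s, a, c). (a, s - a, c, n - s - c)"]) auto
  finally show ?thesis ..
qed

lemma fact_div_eq_choose_prod:
  assumes "a \<le> s" "s + c \<le> n"
  shows "fact n div (fact a * fact (s - a) * fact c * fact (n - s - c)) =
    (n choose s) * (s choose a) * ((n - s) choose c)"
proof -
  have "fact n = fact s * fact (n - s) * (n choose s)"
    using assms binomial_fact_lemma [of s n] by simp
  also have "fact s = fact a * fact (s - a) * (s choose a)"
    using assms binomial_fact_lemma [of a s] by simp
  also have "fact (n - s) = fact c * fact (n - s - c) * ((n - s) choose c)"
    using assms binomial_fact_lemma [of c "n - s"] by simp
  finally have "fact n = (fact a * fact (s - a) * fact c * fact (n - s - c)) *
      ((n choose s) * (s choose a) * ((n - s) choose c))"
    by (simp add: mult_ac)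
  then show ?thesis
    by simp
qed

lemma sum_Pow_card:
  fixes f :: "nat \<Rightarrow> 'a::comm_semiring_1"
  assumes "finite W"
  shows "(\<Sum>U\<in>Pow W. f (card U)) = (\<Sum>k\<le>card W. of_nat (card W choose k) * f k)"
proof -
  have "(\<Sum>U\<in>Pow W. f (card U)) = (\<Sum>k\<le>card W. \<Sum>U | U \<in> Pow W \<and> card U = k. f (card U))"
    using assms by (intro sum.group [symmetric]) (auto intro: card_mono)
  also have "\<dots> = (\<Sum>k\<le>card W. \<Sum>U | U \<subseteq> W \<and> card U = k. f k)"
    by (intro sum.cong refl) auto
  also have "\<dots> = (\<Sum>k\<le>card W. of_nat (card W choose k) * f k)"
    using n_subsets [OF assms] by simp
  finally show ?thesis .
qed

lemma sum_Pow_split: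
  assumes "S \<subseteq> N"
  shows "(\<Sum>T\<in>Pow N. G T) = (\<Sum>X\<in>Pow S. \<Sum>Z\<in>Pow (N - S). G (X \<union> Z))"
proof -
  have "(\<Sum>X\<in>Pow S. \<Sum>Z\<in>Pow (N - S). G (X \<union> Z)) = (\<Sum>(X, Z)\<in>Pow S \<times> Pow (N - S). G (X \<union> Z))"
    by (simp add: sum.cartesian_product)
  also have "\<dots> = (\<Sum>T\<in>Pow N. G T)"
    using assms
    by (intro sum.reindex_bij_witness [where i = "\<lambda>T. (T \<inter> S, T - S)" and j = "\<lambda>(X, Z). X \<union> Z"]) auto
  finally show ?thesis ..
qed

lemma sum_Pow_by_Venn_cards:
  fixes F :: "nat \<Rightarrow> nat \<Rightarrow> nat \<Rightarrow> nat \<Rightarrow> 'a::comm_semiring_1"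
  assumes "finite N" "S \<subseteq> N"
  defines "n \<equiv> card N" and "s \<equiv> card S"
  shows "(\<Sum>T\<in>Pow N. F (card (S \<inter> T)) (card (S - T)) (card (T - S)) (card (N - (S \<union> T)))) =
    (\<Sum>a\<le>s. of_nat (s choose a) * (\<Sum>c\<le>n - s. of_nat ((n - s) choose c) * F a (s - a) c (n - s - c)))"
proof -
  have fin: "finite S" "finite (N - S)"
    using assms by (auto intro: finite_subset)
  then have card_diff: "card (N - S) = n - s"
    using assms by (simp add: card_Diff_subset)
  have "(\<Sum>T\<in>Pow N. F (card (S \<inter> T)) (card (S - T)) (card (T - S)) (card (N - (S \<union> T)))) =
      (\<Sum>X\<in>Pow S. \<Sum>Z\<in>Pow (N - S). F (card (S \<inter> (X \<union> Z))) (card (S - (X \<union> Z)))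
         (card (X \<union> Z - S)) (card (N - (S \<union> (X \<union> Z)))))"
    using assms by (intro sum_Pow_split)
  also have "\<dots> = (\<Sum>X\<in>Pow S. \<Sum>Z\<in>Pow (N - S). F (card X) (s - card X) (card Z) (n - s - card Z))"
  proof (intro sum.cong refl)
    fix X Z assume "X \<in> Pow S" "Z \<in> Pow (N - S)"
    moreover from this have "S \<inter> (X \<union> Z) = X" "S - (X \<union> Z) = S - X" "X \<union> Z - S = Z"
      "N - (S \<union> (X \<union> Z)) = N - S - Z"
      by auto
    ultimately show "F (card (S \<inter> (X \<union> Z))) (card (S - (X \<union> Z))) (card (X \<union> Z - S))
        (card (N - (S \<union> (X \<union> Z)))) = F (card X) (s - card X) (card Z) (n - s - card Z)"
      using fin card_diff by (simp add: s_def card_Diff_subset finite_subset)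
  qed
  also have "\<dots> = (\<Sum>X\<in>Pow S. \<Sum>c\<le>n - s. of_nat ((n - s) choose c) * F (card X) (s - card X) c (n - s - c))"
  proof (intro sum.cong refl)
    fix X
    show "(\<Sum>Z\<in>Pow (N - S). F (card X) (s - card X) (card Z) (n - s - card Z)) =
        (\<Sum>c\<le>n - s. of_nat ((n - s) choose c) * F (card X) (s - card X) c (n - s - c))"
      using sum_Pow_card [OF fin(2), where f = "\<lambda>c. F (card X) (s - card X) c (n - s - c)"]
      by (simp add: card_diff)
  qed
  also have "\<dots> = (\<Sum>a\<le>s. of_nat (s choose a) * (\<Sum>c\<le>n - s. of_nat ((n - s) choose c) * F a (s - a) c (n - s - c)))"
    unfolding s_def
    by (rule sum_Pow_card [OF fin(1), where f = "\<lambda>a. \<Sum>c\<le>n - card S.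
          of_nat ((n - card S) choose c) * F a (card S - a) c (n - card S - c)"])
  finally show ?thesis .
qed

lemma sum_Pow_Pow_by_Venn_cards:
  fixes F :: "nat \<Rightarrow> nat \<Rightarrow> nat \<Rightarrow> nat \<Rightarrow> 'a::comm_semiring_1"
  assumes "finite N"
  defines "n \<equiv> card N"
  shows "(\<Sum>S\<in>Pow N. \<Sum>T\<in>Pow N. F (card (S \<inter> T)) (card (S - T)) (card (T - S)) (card (N - (S \<union> T)))) =
    (\<Sum>(a, b, c, d)\<in>{(a, b, c, d). a + b + c + d = n}.
       of_nat (fact n div (fact a * fact b * fact c * fact d)) * F a b c d)"
proof -
  have "(\<Sum>S\<in>Pow N. \<Sum>T\<in>Pow N. F (card (S \<inter> T)) (card (S - T)) (card (T - S)) (card (N - (S \<union> T)))) =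
      (\<Sum>s\<le>n. of_nat (n choose s) *
        (\<Sum>a\<le>s. of_nat (s choose a) * (\<Sum>c\<le>n - s. of_nat ((n - s) choose c) * F a (s - a) c (n - s - c))))"
    using assms sum_Pow_card [OF assms(1), where f = "\<lambda>s. \<Sum>a\<le>s. of_nat (s choose a) *
        (\<Sum>c\<le>n - s. of_nat ((n - s) choose c) * F a (s - a) c (n - s - c))"]
    by (simp add: sum_Pow_by_Venn_cards)
  also have "\<dots> = (\<Sum>s\<le>n. \<Sum>a\<le>s. \<Sum>c\<le>n - s.
      of_nat ((n choose s) * (s choose a) * ((n - s) choose c)) * F a (s - a) c (n - s - c))"
    by (simp add: sum_distrib_left mult_ac)
  also have "\<dots> = (\<Sum>s\<le>n. \<Sum>a\<le>s. \<Sum>c\<le>n - s.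
      of_nat (fact n div (fact a * fact (s - a) * fact c * fact (n - s - c))) * F a (s - a) c (n - s - c))"
    by (intro sum.cong refl) (subst fact_div_eq_choose_prod; auto)
  also have "\<dots> = (\<Sum>(a, b, c, d)\<in>{(a, b, c, d). a + b + c + d = n}.
       of_nat (fact n div (fact a * fact b * fact c * fact d)) * F a b c d)"
    by (rule sum_quadruples_eq_nested [symmetric])
  finally show ?thesis .
qed

theorem mainTheorem1:
  fixes n :: nat
  assumes "n > 0"
  shows "int (R3 n) =
    (\<Sum>(s00, s10, s01, s11) \<in> {(a, b, c, d). a + b + c + d = n}.
       (-1) ^ (s10 + s01 + 2 * s11)
       * int (fact n div (fact s00 * fact s10 * fact s01 * fact s11))
       * g (int s00 - 1) (int s10) (int s01) (int s11 + 1) ^ s00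
       * g (int s00) (int s10 - 1) (int s01) (int s11 + 1) ^ s10
       * g (int s00) (int s10) (int s01 - 1) (int s11 + 1) ^ s01
       * g (int s00) (int s10) (int s01) (int s11) ^ s11)"
proof -
  let ?N = "{..<n}"
  have "int (R3 n) = (\<Sum>S\<in>Pow ?N. \<Sum>T\<in>Pow ?N. (-1) ^ (card S + card T) *
      (\<Prod>i\<in>?N. \<Sum>j\<in>S. \<Sum>k\<in>T. of_bool (j \<noteq> i \<and> k \<noteq> i \<and> j \<noteq> k)))"
    by (simp add: R3_eq_card_discordant_pairs int_card_discordant_pairs ryser_perm_pairs)
  also have "\<dots> = (\<Sum>S\<in>Pow ?N. \<Sum>T\<in>Pow ?N.
      R3_term (card (S \<inter> T)) (card (S - T)) (card (T - S)) (card (?N - (S \<union> T))))"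
    by (intro sum.cong refl signed_prod_sum_sum_distinct_avoiding) auto
  also have "\<dots> = (\<Sum>(a, b, c, d)\<in>{(a, b, c, d). a + b + c + d = n}.
      int (fact n div (fact a * fact b * fact c * fact d)) * R3_term a b c d)"
    using sum_Pow_Pow_by_Venn_cards [of ?N R3_term] by simp
  finally show ?thesis
    by (simp add: R3_term_def mult_ac)
qed

end
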